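(* Let $m\neq n$ be nonzero integers and let $\varphi:Q(m,n)\to E(m,n)$ be the isomorphism defined below. Let $\sigma:Q(m,n)\to E(m,n)$ be the morphism extending $(X_0:X_1:X_2:X_3)\mapsto\bigl(X_0^2/X_1^2,\ X_0X_2X_3/X_1^3\bigr)$ (sending points with $X_1=0$ to the point at infinity). Then $\sigma(S)=-2\varphi(S)$ for every point $S$ of $Q(m,n)$, where $-2$ denotes the negative of the doubling map in the group law of $E(m,n)$. In particular, in the case $m=-n$, the morphism $\tau$ extending $(X_0:X_1:X_2:X_3)\mapsto\bigl(X_0^2/X_1^2,\ -X_0X_2X_3/X_1^3\bigr)$ satisfies $\tau(S)=2\varphi(S)$ for every point $S$ of $Q(-n,n)$.
   Context: $Q(m,n)\subset\mathbb{P}^3$ is the curve $X_0^2+mX_1^2=X_2^2,\ X_0^2+nX_1^2=X_3^2$ and $E(m,n)$ is the elliptic curve $y^2=x(x+m)(x+n)$ (projectively $Y^2T=X(X+mT)(X+nT)$ with coordinates $(T:X:Y)$), with neutral element the point at infinity. $\varphi:Q(m,n)\to E(m,n)$ is the isomorphism of curves extending the rational map $(X_0:X_1:X_2:X_3)\mapsto\bigl(nX_2-mX_3+(m-n)X_0\ :\ mn(X_3-X_2)\ :\ mn(m-n)X_1\bigr)$ (in coordinates $(T:X:Y)$). *)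

theory Defs
  imports Main
begin

datatype 'a ecpt = Inf | Aff 'a 'a

definition on_E :: "int \<Rightarrow> int \<Rightarrow> 'a::field_char_0 ecpt \<Rightarrow> bool" where
  "on_E m n P = (case P of Inf \<Rightarrow> True
     | Aff x y \<Rightarrow> y^2 = x * (x + of_int m) * (x + of_int n))"

text \<open>Group law on E(m,n) (Weierstrass form y^2 = x^3 + a2 x^2 + a4 x, a2 = m+n, a4 = mn):
  the standard chord-and-tangent addition.\<close>
definition ec_add :: "int \<Rightarrow> int \<Rightarrow> 'a::field_char_0 ecpt \<Rightarrow> 'a ecpt \<Rightarrow> 'a ecpt" where
  "ec_add m n P Q = (case P of Inf \<Rightarrow> Q | Aff x1 y1 \<Rightarrow>
     (case Q of Inf \<Rightarrow> P | Aff x2 y2 \<Rightarrow>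
       (if x1 = x2 \<and> y1 = - y2 then Inf
        else (let a2 = of_int m + of_int n; a4 = of_int m * of_int n;
                  l = (if x1 = x2 then (3 * x1^2 + 2 * a2 * x1 + a4) / (2 * y1)
                       else (y2 - y1) / (x2 - x1));
                  x3 = l^2 - a2 - x1 - x2
              in Aff x3 (- (y1 + l * (x3 - x1)))))))"

definition ec_neg :: "'a::field_char_0 ecpt \<Rightarrow> 'a ecpt" where
  "ec_neg P = (case P of Inf \<Rightarrow> Inf | Aff x y \<Rightarrow> Aff x (- y))"

text \<open>Points of Q(m,n) in P^3, given by a nonzero representative (X0,X1,X2,X3).\<close>
definition on_Q :: "int \<Rightarrow> int \<Rightarrow> 'a::field_char_0 \<times> 'a \<times> 'a \<times> 'a \<Rightarrow> bool" where
  "on_Q m n S = (case S of (X0, X1, X2, X3) \<Rightarrow>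
     (X0, X1, X2, X3) \<noteq> (0, 0, 0, 0) \<and>
     X0^2 + of_int m * X1^2 = X2^2 \<and> X0^2 + of_int n * X1^2 = X3^2)"

text \<open>A projective point (T:X:Y) of E as an element of ecpt (T = 0 on E forces X = 0, i.e. Inf).\<close>
definition proj_to_E :: "'a::field_char_0 \<times> 'a \<times> 'a \<Rightarrow> 'a ecpt" where
  "proj_to_E P = (case P of (T, X, Y) \<Rightarrow> if T = 0 then Inf else Aff (X / T) (Y / T))"

text \<open>The defining triple vanishes only at the point
  (1:0:1:1) (for m,n nonzero and distinct); there the morphism extending the rational map
  takes the value Inf (the limit along the curve).\<close>
definition phi :: "int \<Rightarrow> int \<Rightarrow> 'a::field_char_0 \<times> 'a \<times> 'a \<times> 'a \<Rightarrow> 'a ecpt" where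
  "phi m n S = (case S of (X0, X1, X2, X3) \<Rightarrow>
     (let mm = of_int m; nn = of_int n;
          T = nn * X2 - mm * X3 + (mm - nn) * X0;
          X = mm * nn * (X3 - X2);
          Y = mm * nn * (mm - nn) * X1
      in if (T, X, Y) = (0, 0, 0) then Inf else proj_to_E (T, X, Y)))"

definition sigma :: "'a::field_char_0 \<times> 'a \<times> 'a \<times> 'a \<Rightarrow> 'a ecpt" where
  "sigma S = (case S of (X0, X1, X2, X3) \<Rightarrow>
     if X1 = 0 then Inf else Aff (X0^2 / X1^2) (X0 * X2 * X3 / X1^3))"

definition tau :: "'a::field_char_0 \<times> 'a \<times> 'a \<times> 'a \<Rightarrow> 'a ecpt" where
  "tau S = (case S of (X0, X1, X2, X3) \<Rightarrow>
     if X1 = 0 then Inf else Aff (X0^2 / X1^2) (- (X0 * X2 * X3 / X1^3)))"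

end

theory Submission
  imports Defs
begin

text \<open>
  Write \<open>\<phi>(S) = (T:X:Y)\<close> with \<open>T = nX2 - mX3 + (m-n)X0\<close>, \<open>X = mn(X3-X2)\<close>,
  \<open>Y = mn(m-n)X1\<close>.  Modulo the two quadrics defining Q(m,n), four polynomial identities
  hold: \<open>(T:X:Y)\<close> lies on E, the tangent slope of E at \<open>\<phi>(S)\<close> equals \<open>-(X0+X2+X3)/X1\<close>,
  and the tangent-line doubling formulas give \<open>x(2\<phi>(S)) = X0\<^sup>2/X1\<^sup>2\<close> and
  \<open>y(2\<phi>(S)) = -X0X2X3/X1\<^sup>3\<close>.  So for \<open>X1 \<noteq> 0\<close> we get \<open>2\<phi>(S) = -\<sigma>(S)\<close> by the
  doubling formula of the group law; for \<open>X1 = 0\<close> the point \<open>\<phi>(S)\<close> is either the origin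
  or has \<open>Y = 0\<close>, i.e. is 2-torsion, so \<open>2\<phi>(S) = \<infinity> = \<sigma>(S)\<close>.
\<close>

lemma ec_neg_neg [simp]: "ec_neg (ec_neg P) = P"
  by (simp add: ec_neg_def split: ecpt.split)

lemma ec_double_two_torsion: "ec_add m n (Aff x (0::'a::field_char_0)) (Aff x 0) = Inf"
  by (simp add: ec_add_def)

lemma ec_double_affine:
  fixes x y l x' :: "'a::field_char_0"
  assumes "y \<noteq> 0"
    and slope: "l * (2 * y) = 3 * x^2 + 2 * (of_int m + of_int n) * x + of_int m * of_int n"
    and x': "x' = l^2 - (of_int m + of_int n) - 2 * x"
  shows "ec_add m n (Aff x y) (Aff x y) = Aff x' (- (y + l * (x' - x)))"
proof -
  have not_inverse: "\<not> (x = x \<and> y = - y)" using assms(1) by simp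
  have tangent: "(3 * x^2 + 2 * (of_int m + of_int n) * x + of_int m * of_int n) / (2 * y) = l"
    using assms(1) slope by (simp add: field_simps)
  show ?thesis
    unfolding ec_add_def ecpt.case Let_def if_P[OF refl] if_not_P[OF not_inverse] tangent
    using x' by simp
qed

lemma phi_coords_on_E:
  fixes m n X0 X1 X2 X3 T X Y :: "'a::idom"
  assumes "X0^2 + m*X1^2 = X2^2" "X0^2 + n*X1^2 = X3^2"
    and "T = n*X2 - m*X3 + (m-n)*X0" "X = m*n*(X3-X2)" "Y = m*n*(m-n)*X1"
  shows "Y^2 * T = X * (X + m*T) * (X + n*T)"
  using assms(1,2) unfolding assms(3-) by algebra

text \<open>The tangent slope of E at \<open>(X/T, Y/T)\<close> is \<open>-(X0+X2+X3)/X1\<close> (cleared of denominators).\<close>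
lemma phi_coords_tangent_slope:
  fixes m n X0 X1 X2 X3 T X Y :: "'a::idom"
  assumes "X0^2 + m*X1^2 = X2^2" "X0^2 + n*X1^2 = X3^2"
    and "T = n*X2 - m*X3 + (m-n)*X0" "X = m*n*(X3-X2)" "Y = m*n*(m-n)*X1"
  shows "(3*X^2 + 2*(m+n)*X*T + m*n*T^2) * X1 = - 2*Y*T*(X0+X2+X3)"
  using assms(1,2) unfolding assms(3-) by algebra

text \<open>The x-coordinate of the double is \<open>X0\<^sup>2/X1\<^sup>2\<close>.\<close>
lemma phi_coords_double_x:
  fixes m n X0 X1 X2 X3 T X :: "'a::idom"
  assumes "X0^2 + m*X1^2 = X2^2" "X0^2 + n*X1^2 = X3^2"
    and "T = n*X2 - m*X3 + (m-n)*X0" "X = m*n*(X3-X2)"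
  shows "(X0+X2+X3)^2*T - (m+n)*X1^2*T - 2*X*X1^2 = X0^2*T"
  using assms(1,2) unfolding assms(3-) by algebra

text \<open>The y-coordinate of the double is \<open>-X0X2X3/X1\<^sup>3\<close>.\<close>
lemma phi_coords_double_y:
  fixes m n X0 X1 X2 X3 T X Y :: "'a::idom"
  assumes "X0^2 + m*X1^2 = X2^2" "X0^2 + n*X1^2 = X3^2"
    and "T = n*X2 - m*X3 + (m-n)*X0" "X = m*n*(X3-X2)" "Y = m*n*(m-n)*X1"
  shows "Y*X1^3 - (X0+X2+X3)*(X0^2*T - X*X1^2) = X0*X2*X3*T"
  using assms(1,2) unfolding assms(3-) by algebra

lemma sigma_eq_neg_double_X1_nonzero:
  fixes m n :: int and X0 X1 X2 X3 :: "'a::field_char_0"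
  assumes "m \<noteq> 0" "n \<noteq> 0" "m \<noteq> n" and Q: "on_Q m n (X0, X1, X2, X3)" and X1: "X1 \<noteq> 0"
  shows "ec_add m n (phi m n (X0, X1, X2, X3)) (phi m n (X0, X1, X2, X3))
           = ec_neg (sigma (X0, X1, X2, X3))"
proof -
  define mm :: 'a where "mm = of_int m"
  define nn :: 'a where "nn = of_int n"
  have mm0: "mm \<noteq> 0" and nn0: "nn \<noteq> 0" and mn: "mm \<noteq> nn"
    using assms(1-3) by (auto simp: mm_def nn_def)
  have h1: "X0^2 + mm*X1^2 = X2^2" and h2: "X0^2 + nn*X1^2 = X3^2"
    using Q by (auto simp: on_Q_def mm_def nn_def)
  define T where "T = nn*X2 - mm*X3 + (mm-nn)*X0"
  define X where "X = mm*nn*(X3-X2)"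
  define Y where "Y = mm*nn*(mm-nn)*X1"
  note coords = h1 h2 T_def X_def Y_def
  have Y0: "Y \<noteq> 0" using X1 mm0 nn0 mn by (simp add: Y_def)
  text \<open>\<open>T = 0\<close> would force \<open>X = 0\<close> by the curve equation, hence \<open>X0 = X2 = X3\<close> and \<open>X1 = 0\<close>.\<close>
  have T0: "T \<noteq> 0"
  proof
    assume T: "T = 0"
    with phi_coords_on_E[OF coords] have "X^3 = 0" by (simp add: power3_eq_cube)
    then have "X3 = X2" using mm0 nn0 by (simp add: X_def)
    with T have "(mm - nn) * (X0 - X2) = 0" by (simp add: T_def algebra_simps)
    then have "X0 = X2" using mn by simp
    with h1 mm0 X1 show False by simp
  qed
  define x where "x = X / T"
  define y where "y = Y / T"
  define l where "l = - (X0 + X2 + X3) / X1"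
  define x' where "x' = X0^2 / X1^2"
  have phi_S: "phi m n (X0, X1, X2, X3) = Aff x y"
    using T0 by (simp add: phi_def Let_def proj_to_E_def x_def y_def T_def X_def Y_def mm_def nn_def)
  have y0: "y \<noteq> 0" using Y0 T0 by (simp add: y_def)
  have slope: "l * (2 * y) = 3 * x^2 + 2 * (mm + nn) * x + mm * nn"
    using phi_coords_tangent_slope[OF coords] T0 X1
    unfolding l_def x_def y_def by (simp add: field_simps power2_eq_square) algebra
  have double_x: "x' = l^2 - (mm + nn) - 2 * x"
    using phi_coords_double_x[OF h1 h2 T_def X_def] T0 X1
    unfolding x'_def l_def x_def by (simp add: field_simps power2_eq_square)
  have double_y: "y + l * (x' - x) = X0 * X2 * X3 / X1^3"
    using phi_coords_double_y[OF coords] T0 X1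
    unfolding x'_def l_def x_def y_def by (simp add: field_simps power2_eq_square power3_eq_cube)
  have "ec_add m n (Aff x y) (Aff x y) = Aff x' (- (y + l * (x' - x)))"
    by (rule ec_double_affine[OF y0]) (use slope double_x in \<open>simp_all add: mm_def nn_def\<close>)
  also have "\<dots> = Aff x' (- (X0 * X2 * X3 / X1^3))"
    by (simp only: double_y)
  finally show ?thesis
    using X1 by (simp add: phi_S x'_def sigma_def ec_neg_def)
qed

text \<open>On \<open>X1 = 0\<close>, \<open>\<phi>(S)\<close> is \<open>\<infinity>\<close> or a 2-torsion point, so its double is \<open>\<infinity> = \<sigma>(S)\<close>.\<close>
lemma sigma_eq_neg_double_X1_zero:
  fixes m n :: int and X0 X2 X3 :: "'a::field_char_0"
  shows "ec_add m n (phi m n (X0, 0, X2, X3)) (phi m n (X0, 0, X2, X3))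
           = ec_neg (sigma (X0, 0, X2, X3))"
proof -
  have "phi m n (X0, 0, X2, X3) = Inf \<or> (\<exists>x. phi m n (X0, 0, X2, X3) = Aff x 0)"
    by (auto simp: phi_def Let_def proj_to_E_def)
  moreover have "sigma (X0, 0 :: 'a, X2, X3) = Inf" by (simp add: sigma_def)
  moreover have "ec_add m n Inf Inf = (Inf :: 'a ecpt)" by (simp add: ec_add_def)
  ultimately show ?thesis
    by (auto simp: ec_neg_def ec_double_two_torsion)
qed

lemma sigma_eq_neg_double_phi:
  fixes m n :: int and S :: "'a::field_char_0 \<times> 'a \<times> 'a \<times> 'a"
  assumes "m \<noteq> 0" "n \<noteq> 0" "m \<noteq> n" and "on_Q m n S"
  shows "sigma S = ec_neg (ec_add m n (phi m n S) (phi m n S))"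
proof -
  obtain X0 X1 X2 X3 where S: "S = (X0, X1, X2, X3)" by (cases S) auto
  have "ec_add m n (phi m n S) (phi m n S) = ec_neg (sigma S)"
  proof (cases "X1 = 0")
    case True
    then show ?thesis using sigma_eq_neg_double_X1_zero S by simp
  next
    case False
    then show ?thesis using sigma_eq_neg_double_X1_nonzero assms S by simp
  qed
  then show ?thesis by simp
qed

lemma tau_eq_neg_sigma: "tau S = ec_neg (sigma S)"
  by (auto simp: tau_def sigma_def ec_neg_def split: prod.split)

theorem mainTheorem4:
  fixes m n :: int
  assumes "m \<noteq> 0" and "n \<noteq> 0" and "m \<noteq> n"
  shows "(\<forall>S :: 'a::field_char_0 \<times> 'a \<times> 'a \<times> 'a. on_Q m n S \<longrightarrow>
            sigma S = ec_neg (ec_add m n (phi m n S) (phi m n S)))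
       \<and> (m = - n \<longrightarrow> (\<forall>S :: 'a \<times> 'a \<times> 'a \<times> 'a. on_Q m n S \<longrightarrow>
            tau S = ec_add m n (phi m n S) (phi m n S)))"
proof -
  have sigma: "\<forall>S :: 'a \<times> 'a \<times> 'a \<times> 'a. on_Q m n S \<longrightarrow>
      sigma S = ec_neg (ec_add m n (phi m n S) (phi m n S))"
    using sigma_eq_neg_double_phi[OF assms] by blast
  then have "\<forall>S :: 'a \<times> 'a \<times> 'a \<times> 'a. on_Q m n S \<longrightarrow>
      tau S = ec_add m n (phi m n S) (phi m n S)"
    by (simp add: tau_eq_neg_sigma)
  with sigma show ?thesis by blast
qed

end
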